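(* Let $k$ be a difference field of characteristic $0$ and $R=k\{y_1,\ldots,y_n\}$. If $I,J$ are monomial $\sigma$-ideals of $R$, then $\langle I+J\rangle_r=\langle I\rangle_r+\langle J\rangle_r$.
   Context: A difference field is a field $k$ with a ring endomorphism $\sigma$; $R=k\{y_1,\ldots,y_n\}$ is the polynomial ring over $k$ in the variables $\sigma^j(y_i)$, with $\sigma$ extended naturally. For $p=\sum_ic_ix^i\in\mathbb{N}[x]$ and $a\in R$, $a^p=\prod_i(\sigma^i(a))^{c_i}$; monomials are $\mathbf{y}^{\mathbf{u}}=y_1^{u_1}\cdots y_n^{u_n}$ with $\mathbf{u}\in\mathbb{N}[x]^n$. A $\sigma$-ideal is an ideal stable under $\sigma$; monomial if generated by monomials; well-mixed if $ab\in I\Rightarrow a\sigma(b)\in I$. $\langle F\rangle_r$ is the smallest radical well-mixed $\sigma$-ideal containing $F$. *)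

theory Defs
  imports Main "HOL-Library.Poly_Mapping"
begin

text \<open>Difference polynomial ring k{y_1..y_n}: the variables sigma^j(y_i) are indexed by
  pairs (i, j) with i in a finite type 'n (CARD('n) = n) and j :: nat.\<close>

type_synonym ('n, 'k) dpoly = "(('n \<times> nat) \<Rightarrow>\<^sub>0 nat) \<Rightarrow>\<^sub>0 'k"

definition difference_field_hom :: "('k::field \<Rightarrow> 'k) \<Rightarrow> bool" where
  "difference_field_hom s \<longleftrightarrow> s 1 = 1 \<and> (\<forall>a b. s (a + b) = s a + s b) \<and> (\<forall>a b. s (a * b) = s a * s b)"

definition mono_shift :: "(('n \<times> nat) \<Rightarrow>\<^sub>0 nat) \<Rightarrow> (('n \<times> nat) \<Rightarrow>\<^sub>0 nat)" where
  "mono_shift m = (\<Sum>x\<in>Poly_Mapping.keys m. Poly_Mapping.single (fst x, Suc (snd x)) (Poly_Mapping.lookup m x))"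

definition sigma_ext :: "('k::field \<Rightarrow> 'k) \<Rightarrow> ('n, 'k) dpoly \<Rightarrow> ('n, 'k) dpoly" where
  "sigma_ext s p = (\<Sum>m\<in>Poly_Mapping.keys p. Poly_Mapping.single (mono_shift m) (s (Poly_Mapping.lookup p m)))"

definition is_ideal :: "'a::comm_ring_1 set \<Rightarrow> bool" where
  "is_ideal I \<longleftrightarrow> 0 \<in> I \<and> (\<forall>a\<in>I. \<forall>b\<in>I. a + b \<in> I) \<and> (\<forall>a\<in>I. \<forall>r. r * a \<in> I)"

definition ideal_gen :: "'a::comm_ring_1 set \<Rightarrow> 'a set" where
  "ideal_gen S = \<Inter>{I. is_ideal I \<and> S \<subseteq> I}"

definition sigma_ideal :: "('a::comm_ring_1 \<Rightarrow> 'a) \<Rightarrow> 'a set \<Rightarrow> bool" where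
  "sigma_ideal s I \<longleftrightarrow> is_ideal I \<and> (\<forall>a\<in>I. s a \<in> I)"

definition well_mixed :: "('a::comm_ring_1 \<Rightarrow> 'a) \<Rightarrow> 'a set \<Rightarrow> bool" where
  "well_mixed s I \<longleftrightarrow> (\<forall>a b. a * b \<in> I \<longrightarrow> a * s b \<in> I)"

definition radical_set :: "'a::comm_ring_1 set \<Rightarrow> bool" where
  "radical_set I \<longleftrightarrow> (\<forall>a (m::nat). 0 < m \<longrightarrow> a ^ m \<in> I \<longrightarrow> a \<in> I)"

definition dmonomials :: "('n, 'k::field) dpoly set" where
  "dmonomials = range (\<lambda>u. Poly_Mapping.single u 1)"

definition monomial_sigma_ideal :: "('k::field \<Rightarrow> 'k) \<Rightarrow> ('n, 'k) dpoly set \<Rightarrow> bool" where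
  "monomial_sigma_ideal s I \<longleftrightarrow> sigma_ideal (sigma_ext s) I \<and> (\<exists>S\<subseteq>dmonomials. I = ideal_gen S)"

definition rwm_closure :: "('k::field \<Rightarrow> 'k) \<Rightarrow> ('n, 'k) dpoly set \<Rightarrow> ('n, 'k) dpoly set" where
  "rwm_closure s F = \<Inter>{I. sigma_ideal (sigma_ext s) I \<and> well_mixed (sigma_ext s) I \<and> radical_set I \<and> F \<subseteq> I}"

definition set_sum :: "'a::plus set \<Rightarrow> 'a set \<Rightarrow> 'a set" where
  "set_sum A B = {a + b | a b. a \<in> A \<and> b \<in> B}"

end

theory Submission
  imports Defs "HOL-Library.Countable_Set"
begin

text \<open>The radical well-mixed closure of a monomial ideal is again spanned by monomials, and its
  set \<open>S\<close> of exponents is upward closed, closed under shifting a summand (\<open>a + b \<in> S \<Longrightarrow>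
  a + \<sigma>(b) \<in> S\<close>) and radical (\<open>m u \<in> S \<Longrightarrow> u \<in> S\<close>). Conversely the span of any such
  set is a radical well-mixed \<open>\<sigma>\<close>-ideal: if \<open>u \<notin> S\<close>, discarding the monomials that involve some
  \<open>\<sigma>\<^sup>j(y\<^sub>i)\<close> with \<open>j\<close> beyond every order of \<open>y\<^sub>i\<close> in \<open>y\<^sup>u\<close> is a ring endomorphism
  compatible with \<open>\<sigma>\<close> which kills the span of \<open>S\<close> (by the closure properties of \<open>S\<close>) but
  not \<open>y\<^sup>u\<close>, and the ring is a domain. These properties survive unions, and the span of
  \<open>S\<^sub>I \<union> S\<^sub>J\<close> is the sum of the spans; hence both sides of the theorem equal it.\<close>

section \<open>Polynomials in countably many variables form a domain\<close>

lemma lookup_map_key: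
  assumes [transfer_rule]: "inj f"
  shows "Poly_Mapping.lookup (Poly_Mapping.map_key f p) k = Poly_Mapping.lookup p (f k)"
  by transfer simp

lemma bij_map_key:
  assumes "bij f"
  shows "bij (Poly_Mapping.map_key f :: ('a \<Rightarrow>\<^sub>0 'c::zero) \<Rightarrow> _)"
proof (rule o_bij)
  have inj: "inj f" "inj (inv f)"
    using assms bij_imp_bij_inv bij_is_inj by blast+
  have inverse: "f \<circ> inv f = (\<lambda>x. x)" "inv f \<circ> f = (\<lambda>x. x)"
    using assms by (auto simp: fun_eq_iff bij_is_surj surj_f_inv_f bij_is_inj inv_f_f)
  show "Poly_Mapping.map_key (inv f) \<circ> Poly_Mapping.map_key f = (id :: ('a \<Rightarrow>\<^sub>0 'c) \<Rightarrow> _)"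
    and "Poly_Mapping.map_key f \<circ> Poly_Mapping.map_key (inv f) = (id :: ('b \<Rightarrow>\<^sub>0 'c) \<Rightarrow> _)"
    by (simp_all add: fun_eq_iff map_key_compose[OF inj] map_key_compose[OF inj(2,1)] inverse map_key_id)
qed

lemma map_key_mult:
  fixes H :: "'a::monoid_add \<Rightarrow> 'b::monoid_add"
  assumes "bij H" and H_add: "\<And>x y. H (x + y) = H x + H y"
  shows "Poly_Mapping.map_key H (p * q) =
    Poly_Mapping.map_key H p * (Poly_Mapping.map_key H q :: _ \<Rightarrow>\<^sub>0 'c::semiring_0)"
proof (rule poly_mapping_eqI)
  fix k
  have inj: "inj H" using assms(1) bij_is_inj by blast
  have H_eq_add: "H k = H l + H r \<longleftrightarrow> k = l + r" for l r
    by (metis H_add inj injD)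
  have "Poly_Mapping.lookup (Poly_Mapping.map_key H p * Poly_Mapping.map_key H q) k
     = (\<Sum>l. Poly_Mapping.lookup p (H l) * (\<Sum>r. Poly_Mapping.lookup q (H r) when k = l + r))"
    by (simp add: lookup_mult lookup_map_key inj)
  also have "\<dots> = (\<Sum>l. Poly_Mapping.lookup p (H l) * (\<Sum>r. Poly_Mapping.lookup q r when H k = H l + r))"
    by (intro Sum_any.cong arg_cong[where f = "(*) _"] Sum_any.reindex_cong[OF assms(1), symmetric])
      (simp add: fun_eq_iff H_eq_add)
  also have "\<dots> = (\<Sum>l. Poly_Mapping.lookup p l * (\<Sum>r. Poly_Mapping.lookup q r when H k = l + r))"
    by (rule Sum_any.reindex_cong[OF assms(1), symmetric]) (simp add: fun_eq_iff)
  also have "\<dots> = Poly_Mapping.lookup (Poly_Mapping.map_key H (p * q)) k"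
    by (simp add: lookup_mult lookup_map_key inj)
  finally show "Poly_Mapping.lookup (Poly_Mapping.map_key H (p * q)) k =
      Poly_Mapping.lookup (Poly_Mapping.map_key H p * Poly_Mapping.map_key H q) k"
    by simp
qed

text \<open>The library's \<open>idom\<close> instance needs linearly ordered variables; a bijection of the
  variables with \<open>nat\<close> transports the problem there.\<close>

lemma countable_vars_mult_eq_0_iff:
  fixes p q :: "('v::countable \<Rightarrow>\<^sub>0 nat) \<Rightarrow>\<^sub>0 'k::idom"
  assumes "infinite (UNIV :: 'v set)"
  shows "p * q = 0 \<longleftrightarrow> p = 0 \<or> q = 0"
proof
  assume pq: "p * q = 0"
  define g :: "nat \<Rightarrow> 'v" where "g = from_nat_into UNIV"
  have "bij g"
    unfolding g_def using bij_betw_from_nat_into[of "UNIV :: 'v set"] assms by simp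
  define H :: "(nat \<Rightarrow>\<^sub>0 nat) \<Rightarrow> ('v \<Rightarrow>\<^sub>0 nat)" where "H = Poly_Mapping.map_key (inv g)"
  have H: "bij H" "H (x + y) = H x + H y" for x y
    unfolding H_def using \<open>bij g\<close> bij_imp_bij_inv bij_map_key bij_is_inj map_key_plus by blast+
  define \<Phi> :: "_ \<Rightarrow> (nat \<Rightarrow>\<^sub>0 nat) \<Rightarrow>\<^sub>0 'k" where "\<Phi> = Poly_Mapping.map_key H"
  have \<Phi>_eq_0: "\<Phi> x = 0 \<longleftrightarrow> x = 0" for x
  proof -
    have "\<Phi> 0 = 0" unfolding \<Phi>_def using bij_is_inj[OF \<open>bij H\<close>] by simp
    moreover have "inj \<Phi>" unfolding \<Phi>_def using bij_map_key[OF \<open>bij H\<close>] bij_is_inj by blast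
    ultimately show ?thesis by (metis injD)
  qed
  have "\<Phi> p * \<Phi> q = \<Phi> (p * q)" unfolding \<Phi>_def by (rule map_key_mult[OF H, symmetric])
  then have "\<Phi> p * \<Phi> q = 0" using pq \<Phi>_eq_0 by simp
  then show "p = 0 \<or> q = 0" using \<Phi>_eq_0 by simp
qed auto

lemma dpoly_mult_eq_0_iff:
  fixes p q :: "('n::finite, 'k::field) dpoly"
  shows "p * q = 0 \<longleftrightarrow> p = 0 \<or> q = 0"
  by (rule countable_vars_mult_eq_0_iff) (simp add: finite_prod)

lemma dpoly_power_eq_0_iff:
  fixes p :: "('n::finite, 'k::field) dpoly"
  shows "p ^ m = 0 \<longleftrightarrow> p = 0 \<and> 0 < m"
  by (induction m) (auto simp: dpoly_mult_eq_0_iff)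

section \<open>Discarding monomials\<close>

definition restrict_keys :: "('a \<Rightarrow> bool) \<Rightarrow> ('a \<Rightarrow>\<^sub>0 'c::zero) \<Rightarrow> 'a \<Rightarrow>\<^sub>0 'c" where
  "restrict_keys P p = Abs_poly_mapping (\<lambda>x. Poly_Mapping.lookup p x when P x)"

lemma lookup_restrict_keys:
  "Poly_Mapping.lookup (restrict_keys P p) x = (Poly_Mapping.lookup p x when P x)"
proof -
  have "finite {x. (Poly_Mapping.lookup p x when P x) \<noteq> 0}"
    by (rule finite_subset[OF _ finite_lookup[of p]]) auto
  then show ?thesis unfolding restrict_keys_def by simp
qed

lemma keys_restrict_keys: "Poly_Mapping.keys (restrict_keys P p) = {x \<in> Poly_Mapping.keys p. P x}"
  by (auto simp: in_keys_iff lookup_restrict_keys)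

lemma restrict_keys_eq_0_iff: "restrict_keys P p = 0 \<longleftrightarrow> (\<forall>x\<in>Poly_Mapping.keys p. \<not> P x)"
  unfolding keys_eq_empty[symmetric] keys_restrict_keys by blast

lemma restrict_keys_add_compl:
  "restrict_keys P p + restrict_keys (\<lambda>x. \<not> P x) p = (p :: 'a \<Rightarrow>\<^sub>0 'c::monoid_add)"
  by (rule poly_mapping_eqI) (simp add: lookup_add lookup_restrict_keys when_def)

lemma restrict_keys_mult:
  assumes P_add: "\<And>l r. P (l + r) \<longleftrightarrow> P l \<and> P r"
  shows "restrict_keys P (p * q) =
    restrict_keys P p * (restrict_keys P q :: 'a::monoid_add \<Rightarrow>\<^sub>0 'c::semiring_0)"
proof (rule poly_mapping_eqI)
  fix k
  have "(Poly_Mapping.lookup p l * (\<Sum>r. Poly_Mapping.lookup q r when k = l + r) when P k) =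
      (Poly_Mapping.lookup p l when P l) * (\<Sum>r. (Poly_Mapping.lookup q r when P r) when k = l + r)"
    for l
  proof -
    have "(\<Sum>r. Poly_Mapping.lookup q r when k = l + r) =
        (\<Sum>r. (Poly_Mapping.lookup q r when P r) when k = l + r)" if "P k"
      using that by (intro Sum_any.cong) (auto simp: P_add when_def)
    moreover have "(\<Sum>r. (Poly_Mapping.lookup q r when P r) when k = l + r) = 0"
      if "\<not> P k" "P l"
    proof -
      have "(\<lambda>r. (Poly_Mapping.lookup q r when P r) when k = l + r) = (\<lambda>_. 0)"
        using that by (auto simp: fun_eq_iff when_def P_add)
      then show ?thesis by (metis Sum_any.neutral)
    qed
    moreover have "(\<Sum>r. Poly_Mapping.lookup q r when k = l + r) = 0" if "P k" "\<not> P l"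
    proof -
      have "(\<lambda>r. Poly_Mapping.lookup q r when k = l + r) = (\<lambda>_. 0)"
        using that by (auto simp: fun_eq_iff when_def P_add)
      then show ?thesis by (metis Sum_any.neutral)
    qed
    ultimately show ?thesis by (cases "P k"; cases "P l") auto
  qed
  then show "Poly_Mapping.lookup (restrict_keys P (p * q)) k =
      Poly_Mapping.lookup (restrict_keys P p * restrict_keys P q) k"
    by (simp add: lookup_mult lookup_restrict_keys Sum_any_when_independent[symmetric])
qed

lemma restrict_keys_one:
  "P 0 \<Longrightarrow> restrict_keys P 1 = (1 :: 'a::monoid_add \<Rightarrow>\<^sub>0 'c::semiring_1)"
  by (rule poly_mapping_eqI) (simp add: lookup_restrict_keys lookup_one when_def)

lemma restrict_keys_power:
  fixes p :: "'a::monoid_add \<Rightarrow>\<^sub>0 'c::semiring_1"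
  assumes "P 0" "\<And>l r. P (l + r) \<longleftrightarrow> P l \<and> P r"
  shows "restrict_keys P (p ^ m) = restrict_keys P p ^ m"
  by (induction m) (simp_all add: restrict_keys_one restrict_keys_mult assms)

lemma lookup_mono_shift:
  "Poly_Mapping.lookup (mono_shift u) (i, j) =
    (case j of 0 \<Rightarrow> 0 | Suc j' \<Rightarrow> Poly_Mapping.lookup u (i, j'))"
proof -
  have "Poly_Mapping.lookup (mono_shift u) (i, j) =
      (\<Sum>x\<in>Poly_Mapping.keys u. Poly_Mapping.lookup u x when (fst x, Suc (snd x)) = (i, j))"
    unfolding mono_shift_def by (simp add: lookup_sum lookup_single when_def)
  also have "\<dots> = (case j of 0 \<Rightarrow> 0 | Suc j' \<Rightarrow> Poly_Mapping.lookup u (i, j'))"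
  proof (cases j)
    case (Suc j')
    then have "(\<Sum>x\<in>Poly_Mapping.keys u. Poly_Mapping.lookup u x when (fst x, Suc (snd x)) = (i, j))
        = (\<Sum>x\<in>Poly_Mapping.keys u. Poly_Mapping.lookup u x when x = (i, j'))"
      by (intro sum.cong) auto
    then show ?thesis using Suc by (simp add: in_keys_iff when_def)
  qed simp
  finally show ?thesis .
qed

lemma mono_shift_single:
  "mono_shift (Poly_Mapping.single (i, j) c) = Poly_Mapping.single (i, Suc j) c"
  by (rule poly_mapping_eqI)
    (auto simp: lookup_mono_shift lookup_single when_def split: nat.splits if_splits)

lemma keys_mono_shift: "Poly_Mapping.keys (mono_shift u) = (\<lambda>(i, j). (i, Suc j)) ` Poly_Mapping.keys u"
  by (force simp: in_keys_iff lookup_mono_shift split: nat.splits)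

lemma sigma_ext_single:
  "sigma_ext s (Poly_Mapping.single u 1) = Poly_Mapping.single (mono_shift u) (s 1)"
  by (simp add: sigma_ext_def)

lemma keys_sigma_ext: "Poly_Mapping.keys (sigma_ext s p) \<subseteq> mono_shift ` Poly_Mapping.keys p"
  unfolding sigma_ext_def by (rule order.trans[OF keys_sum]) auto

section \<open>Radical well-mixed exponent sets\<close>

type_synonym 'n exponent = "('n \<times> nat) \<Rightarrow>\<^sub>0 nat"

text \<open>The exponent sets of the monomials of a radical well-mixed monomial \<open>\<sigma>\<close>-ideal; the sum
  \<open>\<Sum>i<m. u\<close> is the exponent of the power \<open>(y\<^sup>u)\<^sup>m\<close>.\<close>

definition rwm_exponent_set :: "'n exponent set \<Rightarrow> bool" where
  "rwm_exponent_set S \<longleftrightarrow> (\<forall>u v. u \<in> S \<longrightarrow> u + v \<in> S)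
    \<and> (\<forall>a b. a + b \<in> S \<longrightarrow> a + mono_shift b \<in> S)
    \<and> (\<forall>u (m::nat). 0 < m \<longrightarrow> (\<Sum>i<m. u) \<in> S \<longrightarrow> u \<in> S)"

lemma rwm_exponent_set_add: "rwm_exponent_set S \<Longrightarrow> u \<in> S \<Longrightarrow> u + v \<in> S"
  unfolding rwm_exponent_set_def by blast

lemma rwm_exponent_set_shift: "rwm_exponent_set S \<Longrightarrow> a + b \<in> S \<Longrightarrow> a + mono_shift b \<in> S"
  unfolding rwm_exponent_set_def by blast

lemma rwm_exponent_set_radical: "rwm_exponent_set S \<Longrightarrow> 0 < (m::nat) \<Longrightarrow> (\<Sum>i<m. u) \<in> S \<Longrightarrow> u \<in> S"
  unfolding rwm_exponent_set_def by blast

lemma rwm_exponent_set_Un: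
  "rwm_exponent_set A \<Longrightarrow> rwm_exponent_set B \<Longrightarrow> rwm_exponent_set (A \<union> B)"
  unfolding rwm_exponent_set_def by blast

lemma rwm_exponent_set_shift_var:
  assumes "rwm_exponent_set S" "a + Poly_Mapping.single (i, j) c \<in> S" "j \<le> j'"
  shows "a + Poly_Mapping.single (i, j') c \<in> S"
  using assms(3,2)
  by (induction j' rule: dec_induct)
    (auto dest: rwm_exponent_set_shift[OF assms(1)] simp: mono_shift_single)

lemma keys_update_add_single:
  assumes "k \<notin> Poly_Mapping.keys p"
  shows "Poly_Mapping.update k v p = p + Poly_Mapping.single k (v :: 'b::monoid_add)"
  using assms by (intro poly_mapping_eqI) (auto simp: lookup_update lookup_add lookup_single in_keys_iff when_def)

definition vars_below :: "'n exponent \<Rightarrow> ('n \<times> nat) set" where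
  "vars_below u = {(i, j). \<exists>j'\<ge>j. (i, j') \<in> Poly_Mapping.keys u}"

lemma rwm_exponent_set_move_into_keys:
  assumes "rwm_exponent_set S" "Poly_Mapping.keys v \<subseteq> vars_below u"
  shows "\<exists>w. Poly_Mapping.keys w \<subseteq> Poly_Mapping.keys u \<and> (\<forall>a. a + v \<in> S \<longrightarrow> a + w \<in> S)"
  using assms(2)
proof (induction v rule: update_induct)
  case const
  show ?case by (intro exI[of _ 0]) simp
next
  case (update v x c)
  then have "Poly_Mapping.keys v \<subseteq> vars_below u" "x \<in> vars_below u"
    by (auto simp: keys_update)
  then obtain w where w: "Poly_Mapping.keys w \<subseteq> Poly_Mapping.keys u" "\<And>a. a + v \<in> S \<Longrightarrow> a + w \<in> S"
    using update.IH by blast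
  obtain i j j' where x: "x = (i, j)" and "j \<le> j'" "(i, j') \<in> Poly_Mapping.keys u"
    using \<open>x \<in> vars_below u\<close> unfolding vars_below_def by blast
  let ?w = "w + Poly_Mapping.single (i, j') c"
  have "a + ?w \<in> S" if "a + Poly_Mapping.update x c v \<in> S" for a
  proof -
    have "(a + v) + Poly_Mapping.single (i, j) c \<in> S"
      using that update.hyps(1) x by (simp add: keys_update_add_single add.assoc)
    then have "(a + v) + Poly_Mapping.single (i, j') c \<in> S"
      using rwm_exponent_set_shift_var[OF assms(1)] \<open>j \<le> j'\<close> by blast
    then have "(a + Poly_Mapping.single (i, j') c) + v \<in> S"
      by (metis add.assoc add.commute)
    then have "(a + Poly_Mapping.single (i, j') c) + w \<in> S"
      by (rule w(2))
    then show ?thesis by (metis add.assoc add.commute)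
  qed
  moreover have "Poly_Mapping.keys ?w \<subseteq> Poly_Mapping.keys u"
    using keys_add[of w "Poly_Mapping.single (i, j') c"] w(1) \<open>(i, j') \<in> Poly_Mapping.keys u\<close>
    by (auto split: if_splits)
  ultimately show ?case by blast
qed

lemma exponent_le_multiple:
  fixes u w :: "'a \<Rightarrow>\<^sub>0 nat"
  assumes "Poly_Mapping.keys w \<subseteq> Poly_Mapping.keys u"
  obtains N :: nat and d where "0 < N" "(\<Sum>i<N. u) = w + d"
proof -
  define N where "N = Suc (\<Sum>x\<in>Poly_Mapping.keys w. Poly_Mapping.lookup w x)"
  have "Poly_Mapping.lookup w x \<le> N * Poly_Mapping.lookup u x" for x
  proof (cases "x \<in> Poly_Mapping.keys w")
    case True
    then have "x \<in> Poly_Mapping.keys u"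
      using assms by blast
    then have "N \<le> N * Poly_Mapping.lookup u x"
      by (simp add: in_keys_iff)
    moreover have "Poly_Mapping.lookup w x \<le> N"
      unfolding N_def using True by (intro le_SucI member_le_sum) auto
    ultimately show ?thesis by linarith
  qed (simp add: in_keys_iff)
  then have "(\<Sum>i<N. u) = w + ((\<Sum>i<N. u) - w)"
    by (intro poly_mapping_eqI) (simp add: lookup_add lookup_minus lookup_sum)
  then show thesis by (rule that[rotated]) (simp add: N_def)
qed

lemma rwm_exponent_set_vars_below:
  assumes S: "rwm_exponent_set S" and "v \<in> S" "Poly_Mapping.keys v \<subseteq> vars_below u"
  shows "u \<in> S"
proof -
  obtain w where w: "Poly_Mapping.keys w \<subseteq> Poly_Mapping.keys u" "w \<in> S"
    using rwm_exponent_set_move_into_keys[OF S assms(3)] \<open>v \<in> S\<close> by (metis add_0)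
  obtain N :: nat and d where "0 < N" "(\<Sum>i<N. u) = w + d"
    using exponent_le_multiple[OF w(1)] .
  then show ?thesis
    using rwm_exponent_set_add[OF S w(2)] rwm_exponent_set_radical[OF S] by metis
qed

section \<open>Ideals spanned by monomials\<close>

definition monomial_span :: "'n exponent set \<Rightarrow> ('n, 'k::field) dpoly set" where
  "monomial_span S = {p. Poly_Mapping.keys p \<subseteq> S}"

lemma is_ideal_monomial_span:
  assumes "rwm_exponent_set S"
  shows "is_ideal (monomial_span S :: ('n, 'k::field) dpoly set)"
  unfolding is_ideal_def
proof (intro conjI ballI allI)
  fix p q r :: "('n, 'k) dpoly"
  assume p: "p \<in> monomial_span S" and q: "q \<in> monomial_span S"
  then show "p + q \<in> monomial_span S"
    using keys_add[of p q] unfolding monomial_span_def by blast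
  have "u + v \<in> S" if "v \<in> Poly_Mapping.keys p" for u v
    using that p rwm_exponent_set_add[OF assms, of v u] by (auto simp: monomial_span_def add.commute)
  then show "r * p \<in> monomial_span S"
    using keys_mult[of r p] unfolding monomial_span_def by blast
qed (simp add: monomial_span_def)

lemma sigma_ideal_monomial_span:
  assumes "rwm_exponent_set S"
  shows "sigma_ideal (sigma_ext s) (monomial_span S)"
proof -
  have "mono_shift u \<in> S" if "u \<in> S" for u
    using rwm_exponent_set_shift[OF assms, of 0 u] that by simp
  then show ?thesis
    using is_ideal_monomial_span[OF assms] keys_sigma_ext[of s]
    unfolding sigma_ideal_def monomial_span_def by blast
qed

lemma keys_add_nat: "Poly_Mapping.keys (l + r) = Poly_Mapping.keys l \<union> Poly_Mapping.keys (r :: 'a \<Rightarrow>\<^sub>0 nat)"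
  by (auto simp: in_keys_iff lookup_add)

lemma restrict_vars_below_mult:
  "restrict_keys (\<lambda>m. Poly_Mapping.keys m \<subseteq> vars_below u) (p * q) =
    restrict_keys (\<lambda>m. Poly_Mapping.keys m \<subseteq> vars_below u) p *
    restrict_keys (\<lambda>m. Poly_Mapping.keys m \<subseteq> vars_below u) (q :: ('n, 'k::field) dpoly)"
  by (rule restrict_keys_mult) (simp add: keys_add_nat)

lemma restrict_vars_below_sigma_ext:
  assumes "restrict_keys (\<lambda>m. Poly_Mapping.keys m \<subseteq> vars_below u) p = 0"
  shows "restrict_keys (\<lambda>m. Poly_Mapping.keys m \<subseteq> vars_below u) (sigma_ext s p) = 0"
proof -
  have "\<not> Poly_Mapping.keys (mono_shift m) \<subseteq> vars_below u" if m: "m \<in> Poly_Mapping.keys p" for m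
  proof -
    have "\<not> Poly_Mapping.keys m \<subseteq> vars_below u"
      using assms m unfolding restrict_keys_eq_0_iff by blast
    then obtain i j where "(i, j) \<in> Poly_Mapping.keys m" "(i, j) \<notin> vars_below u"
      by auto
    then have "(i, Suc j) \<in> Poly_Mapping.keys (mono_shift m)" "(i, Suc j) \<notin> vars_below u"
      by (force simp: keys_mono_shift vars_below_def)+
    then show ?thesis by blast
  qed
  then show ?thesis
    using keys_sigma_ext[of s p] unfolding restrict_keys_eq_0_iff by blast
qed

lemma restrict_vars_below_monomial_span:
  assumes "rwm_exponent_set S" "u \<notin> S" "p \<in> monomial_span S"
  shows "restrict_keys (\<lambda>m. Poly_Mapping.keys m \<subseteq> vars_below u) p = 0"
  using assms rwm_exponent_set_vars_below[OF assms(1)]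
  unfolding restrict_keys_eq_0_iff monomial_span_def by blast

lemma restrict_vars_below_neq_0:
  assumes "u \<in> Poly_Mapping.keys p"
  shows "restrict_keys (\<lambda>m. Poly_Mapping.keys m \<subseteq> vars_below u) p \<noteq> 0"
  using assms unfolding restrict_keys_eq_0_iff vars_below_def by auto

lemma radical_monomial_span:
  assumes "rwm_exponent_set S"
  shows "radical_set (monomial_span S :: ('n::finite, 'k::field) dpoly set)"
  unfolding radical_set_def
proof (intro allI impI)
  fix p :: "('n, 'k) dpoly" and m :: nat
  assume "0 < m" "p ^ m \<in> monomial_span S"
  show "p \<in> monomial_span S"
  proof (rule ccontr)
    assume "p \<notin> monomial_span S"
    then obtain u where "u \<in> Poly_Mapping.keys p" "u \<notin> S" unfolding monomial_span_def by blast
    let ?\<rho> = "restrict_keys (\<lambda>m. Poly_Mapping.keys m \<subseteq> vars_below u)"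
    have "?\<rho> p ^ m = 0"
      using restrict_vars_below_monomial_span[OF assms \<open>u \<notin> S\<close> \<open>p ^ m \<in> _\<close>]
      by (simp add: restrict_keys_power keys_add_nat)
    then show False
      using restrict_vars_below_neq_0[OF \<open>u \<in> _\<close>] by (simp add: dpoly_power_eq_0_iff)
  qed
qed

lemma well_mixed_monomial_span:
  assumes "rwm_exponent_set S"
  shows "well_mixed (sigma_ext s) (monomial_span S :: ('n::finite, 'k::field) dpoly set)"
  unfolding well_mixed_def
proof (intro allI impI)
  fix p q :: "('n, 'k) dpoly"
  assume "p * q \<in> monomial_span S"
  show "p * sigma_ext s q \<in> monomial_span S"
  proof (rule ccontr)
    assume "p * sigma_ext s q \<notin> monomial_span S"
    then obtain u where "u \<in> Poly_Mapping.keys (p * sigma_ext s q)" "u \<notin> S"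
      unfolding monomial_span_def by blast
    let ?\<rho> = "restrict_keys (\<lambda>m. Poly_Mapping.keys m \<subseteq> vars_below u)"
    have "?\<rho> p * ?\<rho> q = 0"
      using restrict_vars_below_monomial_span[OF assms \<open>u \<notin> S\<close> \<open>p * q \<in> _\<close>]
      by (simp add: restrict_vars_below_mult)
    then have "?\<rho> p * ?\<rho> (sigma_ext s q) = 0"
      using restrict_vars_below_sigma_ext[of u q s] by (auto simp: dpoly_mult_eq_0_iff)
    then show False
      using restrict_vars_below_neq_0[OF \<open>u \<in> _\<close>] by (simp add: restrict_vars_below_mult)
  qed
qed

section \<open>Radical well-mixed closures of monomial ideals\<close>

lemma rwm_closure_least:
  "sigma_ideal (sigma_ext s) X \<Longrightarrow> well_mixed (sigma_ext s) X \<Longrightarrow> radical_set X \<Longrightarrow> F \<subseteq> X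
    \<Longrightarrow> rwm_closure s F \<subseteq> X"
  unfolding rwm_closure_def by blast

lemma rwm_closure_upper: "F \<subseteq> rwm_closure s F"
  unfolding rwm_closure_def by blast

lemma rwm_closure_mono: "F \<subseteq> G \<Longrightarrow> rwm_closure s F \<subseteq> rwm_closure s G"
  unfolding rwm_closure_def by blast

lemma sigma_ideal_rwm_closure: "sigma_ideal (sigma_ext s) (rwm_closure s F)"
  unfolding rwm_closure_def sigma_ideal_def is_ideal_def by blast

lemma well_mixed_rwm_closure: "well_mixed (sigma_ext s) (rwm_closure s F)"
  unfolding rwm_closure_def well_mixed_def by blast

lemma radical_rwm_closure: "radical_set (rwm_closure s F)"
  unfolding rwm_closure_def radical_set_def by blast

definition monomial_exponents :: "('n, 'k::field) dpoly set \<Rightarrow> 'n exponent set" where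
  "monomial_exponents C = {u. Poly_Mapping.single u 1 \<in> C}"

lemma single_one_power:
  "Poly_Mapping.single u (1::'k::comm_semiring_1) ^ m = Poly_Mapping.single (\<Sum>i<m. u) 1"
  by (induction m) (simp_all add: mult_single add.commute)

lemma rwm_exponent_set_monomial_exponents:
  fixes C :: "('n, 'k::field) dpoly set"
  assumes "s 1 = 1" "is_ideal C" "well_mixed (sigma_ext s) C" "radical_set C"
  shows "rwm_exponent_set (monomial_exponents C)"
  unfolding rwm_exponent_set_def monomial_exponents_def mem_Collect_eq
proof (intro conjI allI impI)
  fix u v :: "'n exponent"
  assume "Poly_Mapping.single u 1 \<in> C"
  then have "Poly_Mapping.single v 1 * Poly_Mapping.single u 1 \<in> C"
    using assms(2) unfolding is_ideal_def by blast
  then show "Poly_Mapping.single (u + v) (1::'k) \<in> C"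
    by (simp add: mult_single add.commute)
next
  fix a b :: "'n exponent"
  assume "Poly_Mapping.single (a + b) 1 \<in> C"
  then have "Poly_Mapping.single a 1 * sigma_ext s (Poly_Mapping.single b 1) \<in> C"
    using assms(3) unfolding well_mixed_def by (simp add: mult_single)
  then show "Poly_Mapping.single (a + mono_shift b) (1::'k) \<in> C"
    by (simp add: sigma_ext_single assms(1) mult_single)
next
  fix u :: "'n exponent" and m :: nat
  assume "0 < m" "Poly_Mapping.single (\<Sum>i<m. u) 1 \<in> C"
  then show "Poly_Mapping.single u (1::'k) \<in> C"
    using assms(4) unfolding radical_set_def by (metis single_one_power)
qed

lemma monomial_span_monomial_exponents:
  fixes C :: "('n, 'k::field) dpoly set"
  assumes "is_ideal C"
  shows "monomial_span (monomial_exponents C) \<subseteq> C"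
proof
  fix p :: "('n, 'k) dpoly" assume "p \<in> monomial_span (monomial_exponents C)"
  then show "p \<in> C"
    unfolding monomial_span_def mem_Collect_eq
  proof (induction p rule: update_induct)
    case (update p u c)
    then have "insert u (Poly_Mapping.keys p) \<subseteq> monomial_exponents C"
      by (simp add: keys_update)
    then have "Poly_Mapping.single 0 c * Poly_Mapping.single u 1 \<in> C" and "p \<in> C"
      using update.IH assms unfolding is_ideal_def monomial_exponents_def by auto
    then show ?case
      using assms update.hyps(1) unfolding is_ideal_def
      by (simp add: keys_update_add_single mult_single)
  qed (use assms in \<open>simp add: is_ideal_def\<close>)
qed

lemma ideal_gen_least: "is_ideal X \<Longrightarrow> G \<subseteq> X \<Longrightarrow> ideal_gen G \<subseteq> X"
  unfolding ideal_gen_def by blast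

lemma ideal_gen_upper: "G \<subseteq> ideal_gen G"
  unfolding ideal_gen_def by blast

lemma rwm_closure_monomial_ideal:
  fixes G :: "('n::finite, 'k::field) dpoly set"
  assumes "s 1 = 1" "G \<subseteq> dmonomials"
  obtains S where "rwm_exponent_set S" "rwm_closure s (ideal_gen G) = monomial_span S"
proof
  let ?C = "rwm_closure s (ideal_gen G)"
  let ?S = "monomial_exponents ?C"
  have C: "is_ideal ?C" "well_mixed (sigma_ext s) ?C" "radical_set ?C"
    using sigma_ideal_rwm_closure well_mixed_rwm_closure radical_rwm_closure
    unfolding sigma_ideal_def by blast+
  show S: "rwm_exponent_set ?S"
    by (rule rwm_exponent_set_monomial_exponents[OF assms(1) C])
  have "G \<subseteq> monomial_span ?S"
    using assms(2) ideal_gen_upper rwm_closure_upper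
    by (fastforce simp: dmonomials_def monomial_span_def monomial_exponents_def)
  then have "?C \<subseteq> monomial_span ?S"
    by (intro rwm_closure_least ideal_gen_least sigma_ideal_monomial_span
        well_mixed_monomial_span radical_monomial_span is_ideal_monomial_span S)
  with monomial_span_monomial_exponents[OF C(1)] show "?C = monomial_span ?S" by blast
qed

lemma monomial_span_Un: "monomial_span (A \<union> B) = set_sum (monomial_span A) (monomial_span B)"
proof
  show "monomial_span (A \<union> B) \<subseteq> set_sum (monomial_span A) (monomial_span B)"
  proof
    fix p assume "p \<in> monomial_span (A \<union> B)"
    then have "restrict_keys (\<lambda>u. u \<in> A) p \<in> monomial_span A"
      "restrict_keys (\<lambda>u. u \<notin> A) p \<in> monomial_span B"
      by (auto simp: monomial_span_def keys_restrict_keys)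
    then show "p \<in> set_sum (monomial_span A) (monomial_span B)"
      using restrict_keys_add_compl[of "\<lambda>u. u \<in> A" p, symmetric] unfolding set_sum_def
      by (intro CollectI exI conjI)
  qed
  show "set_sum (monomial_span A) (monomial_span B) \<subseteq> monomial_span (A \<union> B)"
  proof
    fix p assume "p \<in> set_sum (monomial_span A) (monomial_span B)"
    then obtain a b where "p = a + b" "a \<in> monomial_span A" "b \<in> monomial_span B"
      unfolding set_sum_def by blast
    then show "p \<in> monomial_span (A \<union> B)"
      using keys_add[of a b] unfolding monomial_span_def by blast
  qed
qed

lemma set_sum_subset: "is_ideal X \<Longrightarrow> A \<subseteq> X \<Longrightarrow> B \<subseteq> X \<Longrightarrow> set_sum A B \<subseteq> X"
  unfolding set_sum_def is_ideal_def by blast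

lemma subset_set_sum_left: "0 \<in> B \<Longrightarrow> A \<subseteq> set_sum A (B :: 'a::monoid_add set)"
  unfolding set_sum_def by force

lemma subset_set_sum_right: "0 \<in> A \<Longrightarrow> B \<subseteq> set_sum A (B :: 'a::monoid_add set)"
  unfolding set_sum_def by force

lemma set_sum_rwm_closure_subset:
  assumes "0 \<in> I" "0 \<in> J"
  shows "set_sum (rwm_closure s I) (rwm_closure s J) \<subseteq> rwm_closure s (set_sum I J)"
  using sigma_ideal_rwm_closure assms unfolding sigma_ideal_def
  by (intro set_sum_subset rwm_closure_mono subset_set_sum_left subset_set_sum_right) blast+

theorem corollary5p13:
  fixes s :: "'k::field_char_0 \<Rightarrow> 'k"
    and I J :: "('n::finite, 'k) dpoly set"
  assumes "difference_field_hom s"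
    and "monomial_sigma_ideal s I"
    and "monomial_sigma_ideal s J"
  shows "rwm_closure s (set_sum I J) = set_sum (rwm_closure s I) (rwm_closure s J)"
proof -
  have "s 1 = 1" using assms(1) unfolding difference_field_hom_def by blast
  have "0 \<in> I" "0 \<in> J"
    using assms(2,3) unfolding monomial_sigma_ideal_def sigma_ideal_def is_ideal_def by blast+
  obtain GI GJ where "GI \<subseteq> dmonomials" "I = ideal_gen GI" "GJ \<subseteq> dmonomials" "J = ideal_gen GJ"
    using assms(2,3) unfolding monomial_sigma_ideal_def by blast
  then obtain SI SJ where
    SI: "rwm_exponent_set SI" "rwm_closure s I = monomial_span SI" and
    SJ: "rwm_exponent_set SJ" "rwm_closure s J = monomial_span SJ"
    using rwm_closure_monomial_ideal[where s = s, OF \<open>s 1 = 1\<close>] by metis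
  have S: "rwm_exponent_set (SI \<union> SJ)" using SI(1) SJ(1) by (rule rwm_exponent_set_Un)
  have span: "set_sum (rwm_closure s I) (rwm_closure s J) = monomial_span (SI \<union> SJ)"
    by (simp add: SI SJ monomial_span_Un)
  have "I \<subseteq> monomial_span (SI \<union> SJ)" "J \<subseteq> monomial_span (SI \<union> SJ)"
    using rwm_closure_upper[of I s] rwm_closure_upper[of J s] SI(2) SJ(2)
    by (auto simp: monomial_span_def)
  then have "rwm_closure s (set_sum I J) \<subseteq> monomial_span (SI \<union> SJ)"
    by (intro rwm_closure_least set_sum_subset sigma_ideal_monomial_span
        well_mixed_monomial_span radical_monomial_span is_ideal_monomial_span S)
  moreover have "set_sum (rwm_closure s I) (rwm_closure s J) \<subseteq> rwm_closure s (set_sum I J)"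
    using \<open>0 \<in> I\<close> \<open>0 \<in> J\<close> by (rule set_sum_rwm_closure_subset)
  ultimately show ?thesis using span by blast
qed

end
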